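(* Let $\mathcal H$ be a real Hilbert space, let $\varepsilon\in\left]0,1/2\right[$, and let $x_0\in\mathcal H$. For every $n\in\mathbb N$, let $\alpha_{1,n}\in\left]0,1/(1+\varepsilon)\right]$, let $\alpha_{2,n}\in\left]0,1/(1+\varepsilon)\right]$, let $T_{1,n}\colon\mathcal H\to\mathcal H$ be $\alpha_{1,n}$-averaged, let $T_{2,n}\colon\mathcal H\to\mathcal H$ be $\alpha_{2,n}$-averaged, let $e_{1,n}\in\mathcal H$, and let $e_{2,n}\in\mathcal H$. In addition, for every $n\in\mathbb N$, let $$\lambda_n\in\left[\varepsilon,\frac{(1-\varepsilon)(1+\varepsilon\phi_n)}{\phi_n}\right],\quad\text{where}\quad\phi_n=\frac{\alpha_{1,n}+\alpha_{2,n}-2\alpha_{1,n}\alpha_{2,n}}{1-\alpha_{1,n}\alpha_{2,n}},$$ and set $x_{n+1}=x_n+\lambda_n\big(T_{1,n}(T_{2,n}x_n+e_{2,n})+e_{1,n}-x_n\big)$. Suppose that $S=\bigcap_{n\in\mathbb N}\mathrm{Fix}(T_{1,n}T_{2,n})\neq\varnothing$, $\sum_{n\in\mathbb N}\lambda_n\|e_{1,n}\|<+\infty$, and $\sum_{n\in\mathbb N}\lambda_n\|e_{2,n}\|<+\infty$. Then: (i) for every $x\in S$, $\sum_{n\in\mathbb N}\|T_{1,n}T_{2,n}x_n-T_{2,n}x_n+T_{2,n}x-x\|^2<+\infty$; (ii) for every $x\in S$, $\sum_{n\in\mathbb N}\|T_{2,n}x_n-x_n-T_{2,n}x+x\|^2<+\infty$;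 (iii) $\sum_{n\in\mathbb N}\|T_{1,n}T_{2,n}x_n-x_n\|^2<+\infty$; (iv) if every weak sequential cluster point of $(x_n)_{n\in\mathbb N}$ is in $S$, then $(x_n)_{n\in\mathbb N}$ converges weakly to a point in $S$, and the convergence is strong if $\mathrm{int}\,S\neq\varnothing$; (v) if $\liminf_{n\to\infty} d_S(x_n)=0$, then $(x_n)_{n\in\mathbb N}$ converges strongly to a point in $S$.
   Context: An operator $T\colon\mathcal H\to\mathcal H$ is nonexpansive if it is 1-Lipschitz; for $\alpha\in\left]0,1\right[$, a nonexpansive $T$ is $\alpha$-averaged if there exists a nonexpansive $R\colon\mathcal H\to\mathcal H$ with $T=(1-\alpha)\mathrm{Id}+\alpha R$. $\mathrm{Fix}$ denotes the fixed point set, $d_S$ the distance function to $S$, $\mathrm{int}\,S$ the interior of $S$. *)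

theory Defs
  imports "HOL-Analysis.Analysis"
begin

definition nonexpansive :: "('a::real_normed_vector \<Rightarrow> 'a) \<Rightarrow> bool" where
  "nonexpansive T \<longleftrightarrow> (\<forall>x y. norm (T x - T y) \<le> norm (x - y))"

definition averaged :: "real \<Rightarrow> ('a::real_normed_vector \<Rightarrow> 'a) \<Rightarrow> bool" where
  "averaged \<alpha> T \<longleftrightarrow> 0 < \<alpha> \<and> \<alpha> < 1 \<and> nonexpansive T \<and>
     (\<exists>R. nonexpansive R \<and> T = (\<lambda>x. (1 - \<alpha>) *\<^sub>R x + \<alpha> *\<^sub>R R x))"

definition Fix :: "('a \<Rightarrow> 'a) \<Rightarrow> 'a set" where
  "Fix T = {x. T x = x}"

definition weakly_converges :: "(nat \<Rightarrow> 'a::real_inner) \<Rightarrow> 'a \<Rightarrow> bool" where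
  "weakly_converges x l \<longleftrightarrow> (\<forall>y. ((\<lambda>n. inner (x n) y) \<longlongrightarrow> inner l y) sequentially)"

definition weak_seq_cluster_point :: "(nat \<Rightarrow> 'a::real_inner) \<Rightarrow> 'a \<Rightarrow> bool" where
  "weak_seq_cluster_point x z \<longleftrightarrow> (\<exists>r. strict_mono r \<and> weakly_converges (x \<circ> r) z)"

end

(* Averagedness bounds |T1 T2 x - z|^2, for z in S, by |x - z|^2 minus (1 - a_i)/a_i times the
   squared residuals of T1 and T2 (the quantities in (i) and (ii)). Writing b_i = (1 - a_i)/a_i,
   one has 1/phi = 1 + b1 b2/(b1 + b2), so the upper bound on lambda_n leaves a uniform fraction
   eps^3/2 of these residuals after relaxation. With the summable errors, (x_n) is therefore
   quasi-Fejer monotone with respect to S and (i)-(iii) follow by telescoping. The rest is the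
   theory of quasi-Fejer sequences: Opial's argument for weak convergence (bounded sequences have
   weakly convergent subsequences, via the Riesz representation theorem), strong convergence when
   S has interior points, and strong convergence when lim inf d_S(x_n) = 0. *)

theory Submission
  imports Defs "HOL-Library.Diagonal_Subsequence"
begin

section \<open>Projections, Riesz representation and weak compactness\<close>

lemma add_power2_le:
  fixes a b :: real
  shows "(a + b)^2 \<le> 2 * a^2 + 2 * b^2"
proof -
  have "(a + b)^2 + (a - b)^2 = 2 * a^2 + 2 * b^2" by (simp add: power2_eq_square algebra_simps)
  then show ?thesis using zero_le_power2[of "a - b"] by linarith
qed

lemma power2_le_add_if_le:
  fixes a b \<delta> :: real
  assumes "0 \<le> a" "a \<le> b + \<delta>"
  shows "a^2 \<le> b^2 + \<delta> * (2 * b + \<delta>)"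
proof -
  have "a^2 \<le> (b + \<delta>)^2" using assms by (intro power_mono)
  then show ?thesis by (simp add: power2_eq_square algebra_simps)
qed

lemma parallelogram_midpoint:
  fixes y a b :: "'a::real_inner"
  shows "(norm (a - b))^2 + 4 * (norm (y - ((1/2) *\<^sub>R a + (1/2) *\<^sub>R b)))^2
    = 2 * (norm (y - a))^2 + 2 * (norm (y - b))^2"
  unfolding power2_norm_eq_inner
  by (simp add: inner_diff_left inner_diff_right inner_add_left inner_add_right inner_commute algebra_simps)

lemma Cauchy_minimizing_convex:
  fixes C :: "'a::real_inner set"
  assumes cvx: "convex C" and c: "\<And>n. c n \<in> C"
    and d_le: "\<And>a. a \<in> C \<Longrightarrow> d \<le> (norm (y - a))^2"
    and minimizing: "\<And>n. (norm (y - c n))^2 < d + 1 / Suc n"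
  shows "Cauchy c"
proof (rule metric_CauchyI)
  fix e :: real assume e: "e > 0"
  obtain N :: nat where N: "4 / e^2 < N" using reals_Archimedean2 by blast
  then have "N > 0" using e by (metis of_nat_0_less_iff order.strict_trans zero_less_divide_iff zero_less_numeral zero_less_power)
  have "dist (c m) (c n) < e" if "N \<le> m" "N \<le> n" for m n
  proof -
    have "(1/2) *\<^sub>R c m + (1/2) *\<^sub>R c n \<in> C" using cvx c by (intro convexD) auto
    then have "(norm (c m - c n))^2 \<le> 2 * (norm (y - c m))^2 + 2 * (norm (y - c n))^2 - 4 * d"
      using d_le parallelogram_midpoint[of "c m" "c n" y] by force
    moreover have "1 / Suc m \<le> 1 / N" "1 / Suc n \<le> 1 / N" using that \<open>N > 0\<close> by (auto simp: divide_simps)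
    ultimately have "(norm (c m - c n))^2 < 4 / N" using minimizing[of m] minimizing[of n] by linarith
    also have "\<dots> < e^2" using N e \<open>N > 0\<close> by (simp add: divide_simps mult.commute)
    finally show ?thesis using e by (simp add: dist_norm power_less_imp_less_base)
  qed
  then show "\<exists>M. \<forall>m\<ge>M. \<forall>n\<ge>M. dist (c m) (c n) < e" by blast
qed

lemma closest_point_exists_complete:
  fixes C :: "'a::{real_inner,complete_space} set"
  assumes cl: "closed C" and cvx: "convex C" and ne: "C \<noteq> {}"
  shows "\<exists>p\<in>C. \<forall>c\<in>C. norm (y - p) \<le> norm (y - c)"
proof -
  define d where "d = (INF c\<in>C. (norm (y - c))^2)"
  have bdd: "bdd_below ((\<lambda>c. (norm (y - c))^2) ` C)" by (auto intro!: bdd_belowI[of _ 0])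
  have d_le: "d \<le> (norm (y - c))^2" if "c \<in> C" for c unfolding d_def by (rule cINF_lower[OF bdd that])
  have "\<exists>c\<in>C. (norm (y - c))^2 < d + 1 / Suc n" for n
  proof -
    have "(INF c\<in>C. (norm (y - c))^2) < d + 1 / Suc n" by (simp add: d_def)
    then show ?thesis using ne bdd by (subst (asm) cINF_less_iff) auto
  qed
  then obtain c where c: "\<And>n. c n \<in> C" "\<And>n. (norm (y - c n))^2 < d + 1 / Suc n" by metis
  then obtain p where p: "c \<longlonglongrightarrow> p"
    using Cauchy_minimizing_convex[OF cvx c(1) d_le c(2)] Cauchy_convergent_iff convergent_def by metis
  have "(norm (y - p))^2 \<le> d + 0"
  proof (rule tendsto_le[OF trivial_limit_sequentially])
    show "(\<lambda>n. (norm (y - c n))^2) \<longlonglongrightarrow> (norm (y - p))^2" by (intro tendsto_intros p)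
    show "(\<lambda>n. d + 1 / Suc n) \<longlonglongrightarrow> d + 0"
      by (intro tendsto_intros LIMSEQ_inverse_real_of_nat[unfolded inverse_eq_divide])
  qed (use c(2) less_imp_le in \<open>auto intro!: always_eventually\<close>)
  then have "norm (y - p) \<le> norm (y - c')" if "c' \<in> C" for c'
    using d_le[OF that] by (simp add: power2_le_imp_le)
  then show ?thesis using closed_sequentially[OF cl c(1) p] by blast
qed

lemma orthogonal_projection_exists:
  fixes C :: "'a::{real_inner,complete_space} set"
  assumes sub: "subspace C" and cl: "closed C"
  shows "\<exists>p\<in>C. \<forall>m\<in>C. inner (y - p) m = 0"
proof -
  obtain p where p: "p \<in> C" and min: "\<And>c. c \<in> C \<Longrightarrow> norm (y - p) \<le> norm (y - c)"
    using closest_point_exists_complete[OF cl subspace_imp_convex[OF sub]] sub subspace_0 by blast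
  have "inner (y - p) m = 0" if m: "m \<in> C" for m
  proof (cases "m = 0")
    case False
    define t where "t = inner (y - p) m / (norm m)^2"
    have "p + t *\<^sub>R m \<in> C" using sub p m by (simp add: subspace_add subspace_scale)
    then have "(norm (y - p))^2 \<le> (norm (y - (p + t *\<^sub>R m)))^2" using min by (simp add: power_mono)
    also have "\<dots> = (norm (y - p))^2 - (inner (y - p) m)^2 / (norm m)^2"
      using False unfolding t_def power2_norm_eq_inner
      by (simp add: inner_diff_left inner_diff_right inner_add_right inner_commute power2_eq_square field_simps)
    finally have "(inner (y - p) m)^2 / (norm m)^2 \<le> 0" by simp
    then show ?thesis using False by (simp add: divide_le_0_iff)
  qed simp
  then show ?thesis using p by blast
qed

lemma riesz_representation:
  fixes f :: "'a::{real_inner,complete_space} \<Rightarrow> real"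
  assumes "bounded_linear f"
  shows "\<exists>z. \<forall>y. f y = inner z y"
proof (cases "\<forall>y. f y = 0")
  case False
  then obtain y0 where y0: "f y0 \<noteq> 0" by blast
  interpret f: bounded_linear f by fact
  define N where "N = {y. f y = 0}"
  have "subspace N" unfolding N_def subspace_def by (auto simp: f.add f.scale f.zero)
  moreover have "closed N" unfolding N_def
    by (intro closed_Collect_eq continuous_on_const f.continuous_on continuous_on_id)
  ultimately obtain p where p: "p \<in> N" "\<And>m. m \<in> N \<Longrightarrow> inner (y0 - p) m = 0"
    using orthogonal_projection_exists by blast
  define w where "w = y0 - p"
  have fw: "f w = f y0" using p(1) by (simp add: w_def f.diff N_def)
  have ww: "inner w w > 0" using fw y0 by auto
  have w_inner: "inner w y = f y / f w * inner w w" for y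
  proof -
    have "y - (f y / f w) *\<^sub>R w \<in> N" using fw y0 by (simp add: N_def f.diff f.scale)
    then have "inner w (y - (f y / f w) *\<^sub>R w) = 0" using p(2) by (simp add: w_def)
    then show ?thesis by (simp add: inner_diff_right)
  qed
  have "f y = inner ((f w / inner w w) *\<^sub>R w) y" for y
    using w_inner[of y] ww fw y0 by (simp add: field_simps)
  then show ?thesis by blast
qed (intro exI[of _ 0], simp)

lemma bounded_inner_subseq_convergent:
  fixes x :: "nat \<Rightarrow> 'a::real_inner"
  assumes B: "\<And>n. norm (x n) \<le> B"
  shows "\<exists>r. strict_mono r \<and> (\<forall>k. convergent (\<lambda>n. inner (x (r n)) (x k)))"
proof -
  define P where "P k s \<longleftrightarrow> convergent (\<lambda>n. inner (x (s n)) (x k))" for k and s :: "nat \<Rightarrow> nat"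
  interpret subseqs P
  proof
    fix k and s :: "nat \<Rightarrow> nat"
    obtain f where f: "strict_mono f" "monoseq (\<lambda>n. inner (x (s (f n))) (x k))"
      using seq_monosub[of "\<lambda>n. inner (x (s n)) (x k)"] by blast
    have "norm (inner (x i) (x k)) \<le> B * B" for i
    proof -
      have "norm (inner (x i) (x k)) \<le> norm (x i) * norm (x k)"
        unfolding real_norm_def by (rule Cauchy_Schwarz_ineq2)
      also have "\<dots> \<le> B * B" using B norm_ge_zero order_trans by (intro mult_mono) blast+
      finally show ?thesis .
    qed
    then have "Bseq (\<lambda>n. inner (x (s (f n))) (x k))" by (intro BseqI')
    then have "convergent (\<lambda>n. inner (x (s (f n))) (x k))" using f(2) Bseq_monoseq_convergent by blast
    then show "\<exists>r'. strict_mono r' \<and> P k (s \<circ> r')" using f(1) by (auto simp: P_def o_def)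
  qed
  have "P k diagseq" for k
  proof -
    have "P k (diagseq \<circ> ((+) (Suc k)))"
    proof (rule diagseq_holds)
      fix r s n assume "strict_mono (r :: nat \<Rightarrow> nat)" "P n s"
      then show "P n (s \<circ> r)"
        unfolding P_def using convergent_subseq_convergent by (fastforce simp: o_def)
    qed
    then show ?thesis unfolding P_def o_def
      by (subst convergent_ignore_initial_segment[symmetric, of _ "Suc k"]) (simp add: add.commute)
  qed
  then show ?thesis using subseq_diagseq unfolding P_def by blast
qed

lemma closed_inner_convergent:
  fixes x :: "nat \<Rightarrow> 'a::real_inner"
  assumes B: "\<And>n. norm (x n) \<le> B"
  shows "closed {y. convergent (\<lambda>n. inner (x n) y)}"
  unfolding closed_sequential_limits
proof (intro allI impI, elim conjE)
  fix ys p assume ys: "\<forall>j. ys j \<in> {y. convergent (\<lambda>n. inner (x n) y)}" and lim: "ys \<longlonglongrightarrow> p"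
  define K where "K = 2 * B + 1"
  have K: "K > 0" using B[of 0] norm_ge_zero[of "x 0"] unfolding K_def by linarith
  have split: "dist (inner (x m) p) (inner (x n) p) \<le> K * norm (p - y) + dist (inner (x m) y) (inner (x n) y)"
    for m n y
  proof -
    have "\<bar>inner (x m - x n) (p - y)\<bar> \<le> norm (x m - x n) * norm (p - y)" by (rule Cauchy_Schwarz_ineq2)
    also have "\<dots> \<le> K * norm (p - y)"
      using norm_triangle_ineq4[of "x m" "x n"] B[of m] B[of n] by (intro mult_right_mono) (auto simp: K_def)
    moreover have "inner (x m) p - inner (x n) p = inner (x m - x n) (p - y) + (inner (x m) y - inner (x n) y)"
      by (simp add: inner_diff_left inner_diff_right)
    ultimately show ?thesis unfolding dist_real_def by linarith
  qed
  have "Cauchy (\<lambda>n. inner (x n) p)"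
  proof (rule metric_CauchyI)
    fix e :: real assume e: "e > 0"
    then obtain j where j: "dist (ys j) p < e / (2 * K)"
      using metric_LIMSEQ_D[OF lim, of "e / (2 * K)"] K by auto
    have "Cauchy (\<lambda>n. inner (x n) (ys j))" using ys by (simp add: Cauchy_convergent_iff)
    then obtain N where N: "\<And>m n. m \<ge> N \<Longrightarrow> n \<ge> N \<Longrightarrow> dist (inner (x m) (ys j)) (inner (x n) (ys j)) < e / 2"
      using e by (meson metric_CauchyD half_gt_zero)
    have "K * norm (p - ys j) < e / 2" using j K by (simp add: dist_norm norm_minus_commute field_simps)
    then have "dist (inner (x m) p) (inner (x n) p) < e" if "m \<ge> N" "n \<ge> N" for m n
      using split[of m n "ys j"] N[OF that] by linarith
    then show "\<exists>M. \<forall>m\<ge>M. \<forall>n\<ge>M. dist (inner (x m) p) (inner (x n) p) < e" by blast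
  qed
  then show "p \<in> {y. convergent (\<lambda>n. inner (x n) y)}" by (simp add: Cauchy_convergent_iff)
qed

lemma weakly_converges_if_inner_convergent:
  fixes x :: "nat \<Rightarrow> 'a::{real_inner,complete_space}"
  assumes B: "\<And>n. norm (x n) \<le> B" and conv: "\<And>y. convergent (\<lambda>n. inner (x n) y)"
  shows "\<exists>z. weakly_converges x z"
proof -
  define f where "f y = lim (\<lambda>n. inner (x n) y)" for y
  have f: "(\<lambda>n. inner (x n) y) \<longlonglongrightarrow> f y" for y
    using conv unfolding f_def by (simp add: convergent_LIMSEQ_iff)
  have "bounded_linear f"
  proof (rule bounded_linear_intro[where K=B])
    fix a b
    have "(\<lambda>n. inner (x n) (a + b)) \<longlonglongrightarrow> f a + f b"
      unfolding inner_add_right by (intro tendsto_add f)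
    then show "f (a + b) = f a + f b" using f LIMSEQ_unique by blast
  next
    fix c :: real and a
    have "(\<lambda>n. inner (x n) (c *\<^sub>R a)) \<longlonglongrightarrow> c *\<^sub>R f a"
      unfolding inner_scaleR_right by (simp add: tendsto_mult_left f)
    then show "f (c *\<^sub>R a) = c *\<^sub>R f a" using f LIMSEQ_unique by blast
  next
    fix a
    have "\<bar>inner (x n) a\<bar> \<le> B * norm a" for n
      using order_trans[OF Cauchy_Schwarz_ineq2 mult_right_mono[OF B]] by simp
    then have "\<bar>f a\<bar> \<le> B * norm a"
      by (intro tendsto_le[OF trivial_limit_sequentially tendsto_const tendsto_rabs[OF f]] always_eventually allI)
    then show "norm (f a) \<le> norm a * B" by (simp add: mult.commute)
  qed
  then obtain z where "\<And>y. f y = inner z y" using riesz_representation by blast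
  then have "weakly_converges x z" unfolding weakly_converges_def using f by simp
  then show ?thesis ..
qed

lemma bounded_imp_weakly_convergent_subseq:
  fixes x :: "nat \<Rightarrow> 'a::{real_inner,complete_space}"
  assumes B: "\<And>n. norm (x n) \<le> B"
  shows "\<exists>r z. strict_mono r \<and> weakly_converges (x \<circ> r) z"
proof -
  obtain r where r: "strict_mono r" "\<And>k. convergent (\<lambda>n. inner (x (r n)) (x k))"
    using bounded_inner_subseq_convergent[of x B] B by blast
  define C where "C = {y. convergent (\<lambda>n. inner (x (r n)) y)}"
  have "subspace C"
    unfolding subspace_def C_def
    by (auto simp: convergent_const inner_add_right convergent_add intro: convergent_mult[OF convergent_const])
  moreover have "closed C" unfolding C_def by (rule closed_inner_convergent) (use B in auto)
  ultimately have "y \<in> C" for y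
  proof -
    obtain p where p: "p \<in> C" "\<And>m. m \<in> C \<Longrightarrow> inner (y - p) m = 0"
      using orthogonal_projection_exists[OF \<open>subspace C\<close> \<open>closed C\<close>] by blast
    have "inner (x (r n)) y = inner (x (r n)) p" for n
      using p(2)[of "x (r n)"] r(2) by (simp add: C_def inner_diff_left inner_commute)
    then show ?thesis using p(1) by (simp add: C_def)
  qed
  then obtain z where "weakly_converges (x \<circ> r) z"
    using weakly_converges_if_inner_convergent[of "x \<circ> r" B] B by (auto simp: C_def)
  then show ?thesis using r(1) by blast
qed

section \<open>Opial's lemma\<close>

lemma weakly_converges_unique:
  fixes x :: "nat \<Rightarrow> 'a::real_inner"
  assumes "weakly_converges x a" "weakly_converges x b"
  shows "a = b"
proof -
  have "(\<lambda>n. inner (x n) (a - b)) \<longlonglongrightarrow> inner a (a - b)"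
       "(\<lambda>n. inner (x n) (a - b)) \<longlonglongrightarrow> inner b (a - b)"
    using assms unfolding weakly_converges_def by auto
  then have "inner a (a - b) = inner b (a - b)" using LIMSEQ_unique by blast
  then have "inner (a - b) (a - b) = 0" by (simp add: inner_diff_left)
  then show ?thesis by simp
qed

lemma tendsto_imp_weakly_converges:
  fixes x :: "nat \<Rightarrow> 'a::real_inner"
  assumes "x \<longlonglongrightarrow> a"
  shows "weakly_converges x a"
  unfolding weakly_converges_def using tendsto_inner[OF assms tendsto_const] by blast

lemma weak_seq_cluster_point_subseq:
  assumes "strict_mono s" "weak_seq_cluster_point (x \<circ> s) z"
  shows "weak_seq_cluster_point x z"
  using assms strict_mono_o unfolding weak_seq_cluster_point_def by (metis o_assoc)

lemma not_tendsto_imp_subseq_apart: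
  fixes X :: "nat \<Rightarrow> real"
  assumes "\<not> X \<longlonglongrightarrow> L"
  shows "\<exists>e>0. \<exists>s :: nat \<Rightarrow> nat. strict_mono s \<and> (\<forall>n. e \<le> \<bar>X (s n) - L\<bar>)"
proof -
  obtain e where e: "e > 0" "\<not> eventually (\<lambda>n. \<bar>X n - L\<bar> < e) sequentially"
    using assms unfolding tendsto_iff dist_real_def by auto
  then have "frequently (\<lambda>n. e \<le> \<bar>X n - L\<bar>) sequentially"
    by (simp add: not_eventually not_less)
  then have "infinite {n. e \<le> \<bar>X n - L\<bar>}"
    by (simp add: frequently_cofinite[symmetric] cofinite_eq_sequentially)
  then obtain s :: "nat \<Rightarrow> nat" where "strict_mono s" "\<And>n. s n \<in> {n. e \<le> \<bar>X n - L\<bar>}"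
    using infinite_enumerate by blast
  then show ?thesis using e(1) by blast
qed

lemma weak_seq_cluster_points_eq:
  fixes x :: "nat \<Rightarrow> 'a::real_inner"
  assumes conv: "convergent (\<lambda>n. norm (x n - a))" "convergent (\<lambda>n. norm (x n - b))"
    and clus: "weak_seq_cluster_point x a" "weak_seq_cluster_point x b"
  shows "a = b"
proof -
  have eq: "inner (x n) (a - b) = ((norm a)^2 - (norm b)^2 - ((norm (x n - a))^2 - (norm (x n - b))^2)) / 2" for n
    unfolding power2_norm_eq_inner by (simp add: inner_diff_left inner_diff_right inner_commute algebra_simps)
  obtain La Lb where "(\<lambda>n. norm (x n - a)) \<longlonglongrightarrow> La" "(\<lambda>n. norm (x n - b)) \<longlonglongrightarrow> Lb"
    using conv by (auto simp: convergent_def)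
  then have "(\<lambda>n. inner (x n) (a - b)) \<longlonglongrightarrow> ((norm a)^2 - (norm b)^2 - (La^2 - Lb^2)) / 2"
    unfolding eq by (intro tendsto_divide tendsto_diff tendsto_power tendsto_const) simp_all
  then obtain L where L: "(\<lambda>n. inner (x n) (a - b)) \<longlonglongrightarrow> L" by blast
  have L_eq: "L = inner c (a - b)" if c: "weak_seq_cluster_point x c" for c
  proof -
    obtain r where r: "strict_mono r" "weakly_converges (x \<circ> r) c"
      using c unfolding weak_seq_cluster_point_def by blast
    have "((\<lambda>n. inner (x n) (a - b)) \<circ> r) \<longlonglongrightarrow> inner c (a - b)"
      using r(2) unfolding weakly_converges_def comp_def by blast
    then show ?thesis using LIMSEQ_unique[OF LIMSEQ_subseq_LIMSEQ[OF L r(1)]] by blast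
  qed
  have "inner (a - b) (a - b) = 0" using L_eq[OF clus(1)] L_eq[OF clus(2)] by (simp add: inner_diff_left)
  then show ?thesis by simp
qed

lemma opial:
  fixes x :: "nat \<Rightarrow> 'a::{real_inner,complete_space}"
  assumes B: "\<And>n. norm (x n) \<le> B"
    and conv: "\<And>z. z \<in> S \<Longrightarrow> convergent (\<lambda>n. norm (x n - z))"
    and clus: "\<And>z. weak_seq_cluster_point x z \<Longrightarrow> z \<in> S"
  shows "\<exists>z\<in>S. weakly_converges x z"
proof -
  have unique: "a = b" if "weak_seq_cluster_point x a" "weak_seq_cluster_point x b" for a b
    using weak_seq_cluster_points_eq[OF conv conv] clus that by blast
  have ex: "\<exists>z. weak_seq_cluster_point (x \<circ> s) z" for s :: "nat \<Rightarrow> nat"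
    using bounded_imp_weakly_convergent_subseq[of "x \<circ> s" B] B
    unfolding weak_seq_cluster_point_def by auto
  obtain z where z: "weak_seq_cluster_point x z" using ex[of id] by auto
  have "(\<lambda>n. inner (x n) y) \<longlonglongrightarrow> inner z y" for y
  proof (rule ccontr)
    assume "\<not> ?thesis"
    then obtain e and s :: "nat \<Rightarrow> nat" where e: "e > 0" "strict_mono s" "\<And>n. e \<le> \<bar>inner (x (s n)) y - inner z y\<bar>"
      using not_tendsto_imp_subseq_apart by blast
    obtain z' r where r: "strict_mono r" "weakly_converges (x \<circ> s \<circ> r) z'"
      using ex[of s] unfolding weak_seq_cluster_point_def by blast
    then have "weak_seq_cluster_point (x \<circ> s) z'" unfolding weak_seq_cluster_point_def by blast
    then have "weak_seq_cluster_point x z'" by (rule weak_seq_cluster_point_subseq[OF e(2)])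
    then have "z' = z" using unique z by blast
    have "(\<lambda>n. inner (x (s (r n))) y) \<longlonglongrightarrow> inner z' y"
      using r(2) unfolding weakly_converges_def comp_def by blast
    then have "(\<lambda>n. \<bar>inner (x (s (r n))) y - inner z y\<bar>) \<longlonglongrightarrow> \<bar>inner z' y - inner z y\<bar>"
      by (intro tendsto_rabs tendsto_diff tendsto_const)
    then have "e \<le> \<bar>inner z' y - inner z y\<bar>"
      by (rule tendsto_le[OF trivial_limit_sequentially _ tendsto_const]) (simp add: e(3))
    then show False using e(1) \<open>z' = z\<close> by simp
  qed
  then have "weakly_converges x z" unfolding weakly_converges_def by blast
  then show ?thesis using z clus by blast
qed

section \<open>Quasi-Fejer monotone sequences\<close>

definition quasi_fejer :: "'a::real_normed_vector set \<Rightarrow> (nat \<Rightarrow> real) \<Rightarrow> (nat \<Rightarrow> 'a) \<Rightarrow> bool" where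
  "quasi_fejer S \<delta> x \<longleftrightarrow> (\<forall>n. 0 \<le> \<delta> n) \<and> summable \<delta> \<and>
     (\<forall>z\<in>S. \<forall>n. norm (x (Suc n) - z) \<le> norm (x n - z) + \<delta> n)"

lemma quasi_decreasing_le:
  fixes a \<delta> :: "nat \<Rightarrow> real"
  assumes decr: "\<And>n. a (Suc n) \<le> a n + \<delta> n" and "n \<le> m"
  shows "a m \<le> a n + (\<Sum>k<m. \<delta> k) - (\<Sum>k<n. \<delta> k)"
  using \<open>n \<le> m\<close>
proof (induction m rule: dec_induct)
  case (step k)
  then show ?case using decr[of k] by simp
qed simp

lemma quasi_decreasing_convergent:
  fixes a \<delta> :: "nat \<Rightarrow> real"
  assumes step: "\<And>n. a (Suc n) \<le> a n + \<delta> n"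
    and a0: "\<And>n. 0 \<le> a n" and \<delta>0: "\<And>n. 0 \<le> \<delta> n" and \<delta>: "summable \<delta>"
  shows "convergent a"
proof -
  define b where "b n = a n - (\<Sum>k<n. \<delta> k)" for n
  have "b m \<le> b n" if "n \<le> m" for m n
    using quasi_decreasing_le[of a \<delta>, OF step that] by (simp add: b_def)
  then have "antimono b" unfolding antimono_def by blast
  moreover have "- suminf \<delta> \<le> b n" for n
    using sum_le_suminf[of \<delta> "{..<n}"] \<delta> \<delta>0 a0[of n] by (simp add: b_def)
  ultimately obtain L where "b \<longlonglongrightarrow> L" using decseq_convergent by blast
  then have "(\<lambda>n. b n + (\<Sum>k<n. \<delta> k)) \<longlonglongrightarrow> L + suminf \<delta>"
    by (intro tendsto_add summable_LIMSEQ \<delta>)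
  then show ?thesis by (auto simp: b_def convergent_def)
qed

lemma quasi_fejer_dist_convergent:
  assumes "quasi_fejer S \<delta> x" "z \<in> S"
  shows "convergent (\<lambda>n. norm (x n - z))"
  using assms by (intro quasi_decreasing_convergent[of _ \<delta>]) (auto simp: quasi_fejer_def)

lemma quasi_fejer_bounded:
  assumes "quasi_fejer S \<delta> x" "S \<noteq> {}"
  shows "\<exists>B. \<forall>n. norm (x n) \<le> B"
proof -
  obtain z where z: "z \<in> S" using assms(2) by blast
  have "Bseq (\<lambda>n. norm (x n - z))"
    using quasi_fejer_dist_convergent[OF assms(1) z] by (rule convergent_imp_Bseq)
  then obtain K where K: "\<And>n. norm (x n - z) \<le> K" by (auto simp: Bseq_def)
  have "norm (x n) \<le> K + norm z" for n
    using norm_triangle_ineq[of "x n - z" z] K[of n] by simp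
  then show ?thesis by blast
qed

lemma quasi_fejer_weakly_converges:
  fixes x :: "nat \<Rightarrow> 'a::{real_inner,complete_space}"
  assumes qf: "quasi_fejer S \<delta> x" and "S \<noteq> {}"
    and clus: "\<And>z. weak_seq_cluster_point x z \<Longrightarrow> z \<in> S"
  shows "\<exists>z\<in>S. weakly_converges x z"
proof -
  obtain B where B: "\<And>n. norm (x n) \<le> B" using quasi_fejer_bounded[OF qf \<open>S \<noteq> {}\<close>] by blast
  show ?thesis by (rule opial[OF B quasi_fejer_dist_convergent[OF qf] clus])
qed

lemma summable_telescope_power2:
  fixes a \<delta> :: "nat \<Rightarrow> real"
  assumes "convergent a" "summable \<delta>"
  shows "summable (\<lambda>n. (a n)^2 - (a (Suc n))^2 + \<delta> n * K)"
proof -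
  obtain L where "a \<longlonglongrightarrow> L" using assms(1) by (auto simp: convergent_def)
  then have "(\<lambda>n. (a n)^2) \<longlonglongrightarrow> L^2" by (intro tendsto_intros)
  then have "summable (\<lambda>n. (a n)^2 - (a (Suc n))^2)" by (rule telescope_summable')
  then show ?thesis using assms(2) by (intro summable_add summable_mult2)
qed

lemma convergent_if_summable_norm_diff:
  fixes x :: "nat \<Rightarrow> 'a::{real_normed_vector,complete_space}"
  assumes "summable (\<lambda>n. norm (x (Suc n) - x n))"
  shows "convergent x"
proof -
  define s where "s n = (\<Sum>k<n. norm (x (Suc k) - x k))" for n
  have "Cauchy s"
    using assms unfolding Cauchy_convergent_iff s_def[abs_def] by (simp add: summable_iff_convergent)
  have dist_le: "dist (x m) (x n) \<le> dist (s m) (s n)" if "n \<le> m" for m n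
  proof -
    have "dist (x m) (x n) = norm (\<Sum>k = n..<m. x (Suc k) - x k)"
      using sum_Suc_diff'[OF that, of x] by (simp add: dist_norm)
    also have "\<dots> \<le> (\<Sum>k = n..<m. norm (x (Suc k) - x k))" by (rule norm_sum)
    also have "\<dots> = s m - s n"
      unfolding s_def using sum_diff_nat_ivl[of 0 n m "\<lambda>k. norm (x (Suc k) - x k)"] that
      by (simp add: atLeast0LessThan)
    also have "\<dots> \<le> dist (s m) (s n)" by (simp add: dist_real_def)
    finally show ?thesis .
  qed
  have "Cauchy x"
  proof (rule metric_CauchyI)
    fix e :: real assume "e > 0"
    then obtain N where N: "\<And>m n. m \<ge> N \<Longrightarrow> n \<ge> N \<Longrightarrow> dist (s m) (s n) < e"
      using metric_CauchyD[OF \<open>Cauchy s\<close>] by blast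
    have "dist (x m) (x n) < e" if "m \<ge> N" "n \<ge> N" for m n
    proof (cases "n \<le> m")
      case True
      then show ?thesis using dist_le N[OF that] by (meson le_less_trans)
    next
      case False
      then have "dist (x n) (x m) < e" using dist_le N[OF that(2,1)] by (meson le_less_trans nat_le_linear)
      then show ?thesis by (simp add: dist_commute)
    qed
    then show "\<exists>M. \<forall>m\<ge>M. \<forall>n\<ge>M. dist (x m) (x n) < e" by blast
  qed
  then show ?thesis by (simp add: Cauchy_convergent_iff)
qed

text \<open>The quasi-Fejer inequality at the point of the sphere around \<open>c\<close> in the direction
  of \<open>x - x'\<close> bounds the step length.\<close>

lemma sphere_step_bound:
  fixes c x x' :: "'a::real_inner"
  assumes h: "0 < h" and \<delta>: "0 \<le> \<delta>"
    and step: "\<And>u. norm u = 1 \<Longrightarrow> norm (x' - (c + h *\<^sub>R u)) \<le> norm (x - (c + h *\<^sub>R u)) + \<delta>"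
  shows "2 * h * norm (x - x') \<le> (norm (x - c))^2 - (norm (x' - c))^2 + \<delta> * (2 * (norm (x - c) + h) + \<delta>)"
proof (cases "x = x'")
  case True
  then show ?thesis using h \<delta> by simp
next
  case False
  define u where "u = (1 / norm (x - x')) *\<^sub>R (x - x')"
  have u: "norm u = 1" "inner (x - x') u = norm (x - x')"
    using False by (simp_all add: u_def power2_norm_eq_inner[symmetric] power2_eq_square)
  have "inner u u = 1" using u(1) by (simp add: norm_eq_1)
  then have expand: "(norm (v - (c + h *\<^sub>R u)))^2 = (norm (v - c))^2 - 2 * h * inner (v - c) u + h^2" for v
    unfolding power2_norm_eq_inner
    by (simp add: inner_diff_left inner_diff_right inner_add_left inner_add_right inner_commute power2_eq_square algebra_simps)
  have "norm (h *\<^sub>R u) = h" using h by (simp add: u(1))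
  then have "norm (x - (c + h *\<^sub>R u)) \<le> norm (x - c) + h"
    using norm_triangle_ineq4[of "x - c" "h *\<^sub>R u"] by (simp add: algebra_simps)
  then have "\<delta> * (2 * norm (x - (c + h *\<^sub>R u)) + \<delta>) \<le> \<delta> * (2 * (norm (x - c) + h) + \<delta>)"
    using \<delta> by (intro mult_left_mono) auto
  then have "(norm (x' - (c + h *\<^sub>R u)))^2 \<le> (norm (x - (c + h *\<^sub>R u)))^2 + \<delta> * (2 * (norm (x - c) + h) + \<delta>)"
    using power2_le_add_if_le[OF norm_ge_zero step[OF u(1)]] by linarith
  moreover have "inner (x - c) u - inner (x' - c) u = norm (x - x')"
    using u(2) by (simp add: inner_diff_left)
  ultimately show ?thesis unfolding expand by (simp add: algebra_simps)
qed

lemma quasi_fejer_convergent_if_interior: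
  fixes x :: "nat \<Rightarrow> 'a::{real_inner,complete_space}"
  assumes qf: "quasi_fejer S \<delta> x" and "interior S \<noteq> {}"
  shows "convergent x"
proof -
  obtain c \<rho> where \<rho>: "\<rho> > 0" "ball c \<rho> \<subseteq> S" using \<open>interior S \<noteq> {}\<close> mem_interior by blast
  define h where "h = \<rho> / 2"
  have h: "0 < h" "h < \<rho>" using \<rho>(1) by (auto simp: h_def)
  have \<delta>: "\<And>n. 0 \<le> \<delta> n" "summable \<delta>" using qf by (auto simp: quasi_fejer_def)
  define a where "a n = norm (x n - c)" for n
  have "convergent a" unfolding a_def using \<rho> by (intro quasi_fejer_dist_convergent[OF qf]) auto
  then obtain A where "\<And>n. norm (a n) \<le> A" using convergent_imp_Bseq[of a] by (auto simp: Bseq_def)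
  then have A: "a n \<le> A" for n by (metis abs_le_D1 real_norm_def)
  define K where "K = 2 * (A + h) + suminf \<delta>"
  have "2 * h * norm (x n - x (Suc n)) \<le> (a n)^2 - (a (Suc n))^2 + \<delta> n * K" for n
  proof -
    have "c + h *\<^sub>R u \<in> S" if "norm u = 1" for u
      using \<rho>(2) h that by (auto simp: dist_norm)
    then have "norm (x (Suc n) - (c + h *\<^sub>R u)) \<le> norm (x n - (c + h *\<^sub>R u)) + \<delta> n" if "norm u = 1" for u
      using qf that unfolding quasi_fejer_def by blast
    then have "2 * h * norm (x n - x (Suc n)) \<le> (a n)^2 - (a (Suc n))^2 + \<delta> n * (2 * (a n + h) + \<delta> n)"
      unfolding a_def by (rule sphere_step_bound[OF h(1) \<delta>(1)])
    moreover have "2 * (a n + h) + \<delta> n \<le> K"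
      using A[of n] sum_le_suminf[of \<delta> "{n}"] \<delta> by (simp add: K_def)
    then have "\<delta> n * (2 * (a n + h) + \<delta> n) \<le> \<delta> n * K" using \<delta>(1) by (rule mult_left_mono)
    ultimately show ?thesis by linarith
  qed
  then have bound: "norm (norm (x (Suc n) - x n)) \<le> ((a n)^2 - (a (Suc n))^2 + \<delta> n * K) / (2 * h)" for n
    using h(1) by (simp add: pos_le_divide_eq norm_minus_commute mult.commute)
  have "summable (\<lambda>n. ((a n)^2 - (a (Suc n))^2 + \<delta> n * K) / (2 * h))"
    using summable_telescope_power2[OF \<open>convergent a\<close> \<delta>(2)] by (rule summable_divide)
  then have "summable (\<lambda>n. norm (x (Suc n) - x n))"
    by (rule summable_comparison_test') (rule bound)
  then show ?thesis by (rule convergent_if_summable_norm_diff)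
qed

lemma quasi_fejer_tendsto_if_interior:
  fixes x :: "nat \<Rightarrow> 'a::{real_inner,complete_space}"
  assumes "quasi_fejer S \<delta> x" "interior S \<noteq> {}" "weakly_converges x z"
  shows "x \<longlonglongrightarrow> z"
proof -
  obtain w where w: "x \<longlonglongrightarrow> w" using quasi_fejer_convergent_if_interior[OF assms(1,2)] by (auto simp: convergent_def)
  have "w = z" using weakly_converges_unique[OF tendsto_imp_weakly_converges[OF w] assms(3)] .
  then show ?thesis using w by simp
qed

lemma infdist_geI:
  assumes "S \<noteq> {}" "\<And>z. z \<in> S \<Longrightarrow> c \<le> dist a z"
  shows "c \<le> infdist a S"
  unfolding infdist_notempty[OF assms(1)] by (rule cINF_greatest) (use assms in auto)

lemma quasi_fejer_infdist_le:
  assumes qf: "quasi_fejer S \<delta> x" and "S \<noteq> {}"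
  shows "infdist (x (Suc n)) S \<le> infdist (x n) S + \<delta> n"
proof -
  have "infdist (x (Suc n)) S - \<delta> n \<le> infdist (x n) S"
  proof (rule infdist_geI[OF \<open>S \<noteq> {}\<close>])
    fix z assume z: "z \<in> S"
    have "infdist (x (Suc n)) S \<le> dist (x (Suc n)) z" by (rule infdist_le[OF z])
    also have "\<dots> \<le> dist (x n) z + \<delta> n" using qf z by (simp add: quasi_fejer_def dist_norm)
    finally show "infdist (x (Suc n)) S - \<delta> n \<le> dist (x n) z" by simp
  qed
  then show ?thesis by simp
qed

lemma quasi_fejer_dist_le_infdist:
  assumes qf: "quasi_fejer S \<delta> x" and "S \<noteq> {}" "n \<le> m"
  shows "dist (x m) (x n) \<le> 2 * infdist (x n) S + (suminf \<delta> - (\<Sum>k<n. \<delta> k))"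
proof -
  have \<delta>: "\<And>n. 0 \<le> \<delta> n" "summable \<delta>" using qf by (auto simp: quasi_fejer_def)
  have "(dist (x m) (x n) - (suminf \<delta> - (\<Sum>k<n. \<delta> k))) / 2 \<le> infdist (x n) S"
  proof (rule infdist_geI[OF \<open>S \<noteq> {}\<close>])
    fix z assume z: "z \<in> S"
    have "norm (x m - z) \<le> norm (x n - z) + (\<Sum>k<m. \<delta> k) - (\<Sum>k<n. \<delta> k)"
      using qf z \<open>n \<le> m\<close> by (intro quasi_decreasing_le) (auto simp: quasi_fejer_def)
    moreover have "(\<Sum>k<m. \<delta> k) \<le> suminf \<delta>" using \<delta> by (intro sum_le_suminf) auto
    moreover have "dist (x m) (x n) \<le> norm (x m - z) + norm (x n - z)" by (metis dist_norm dist_triangle2)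
    ultimately show "(dist (x m) (x n) - (suminf \<delta> - (\<Sum>k<n. \<delta> k))) / 2 \<le> dist (x n) z"
      by (simp add: dist_norm)
  qed
  then show ?thesis by simp
qed

lemma quasi_fejer_tendsto_if_liminf_infdist:
  fixes x :: "nat \<Rightarrow> 'a::{real_normed_vector,complete_space}"
  assumes qf: "quasi_fejer S \<delta> x" and "closed S" "S \<noteq> {}"
    and liminf: "Liminf sequentially (\<lambda>n. ereal (infdist (x n) S)) = 0"
  shows "\<exists>z\<in>S. x \<longlonglongrightarrow> z"
proof -
  have \<delta>: "\<And>n. 0 \<le> \<delta> n" "summable \<delta>" using qf by (auto simp: quasi_fejer_def)
  define d where "d n = infdist (x n) S" for n
  have "convergent d"
    unfolding d_def using quasi_fejer_infdist_le[OF qf \<open>S \<noteq> {}\<close>] infdist_nonneg \<delta>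
    by (rule quasi_decreasing_convergent)
  then obtain D where D: "d \<longlonglongrightarrow> D" by (auto simp: convergent_def)
  then have "Liminf sequentially (\<lambda>n. ereal (d n)) = ereal D"
    by (intro lim_imp_Liminf tendsto_ereal) simp_all
  then have "D = 0" using liminf by (simp add: d_def zero_ereal_def)
  define g where "g n = 2 * d n + (suminf \<delta> - (\<Sum>k<n. \<delta> k))" for n
  have "(\<lambda>n. suminf \<delta> - (\<Sum>k<n. \<delta> k)) \<longlonglongrightarrow> suminf \<delta> - suminf \<delta>"
    by (intro tendsto_diff tendsto_const summable_LIMSEQ \<delta>(2))
  then have "g \<longlonglongrightarrow> 2 * D + 0" unfolding g_def[abs_def] by (intro tendsto_add tendsto_mult_left D) simp
  then have g: "g \<longlonglongrightarrow> 0" using \<open>D = 0\<close> by simp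
  have "Cauchy x"
  proof (rule metric_CauchyI)
    fix e :: real assume "e > 0"
    then have "eventually (\<lambda>n. g n < e / 2) sequentially" by (intro order_tendstoD(2)[OF g]) simp
    then obtain N where N: "g N < e / 2" by (auto simp: eventually_sequentially)
    have "dist (x m) (x n) < e" if "m \<ge> N" "n \<ge> N" for m n
      using quasi_fejer_dist_le_infdist[OF qf \<open>S \<noteq> {}\<close> that(1)]
        quasi_fejer_dist_le_infdist[OF qf \<open>S \<noteq> {}\<close> that(2)] N dist_triangle2[of "x m" "x n" "x N"]
      unfolding g_def d_def by linarith
    then show "\<exists>M. \<forall>m\<ge>M. \<forall>n\<ge>M. dist (x m) (x n) < e" by blast
  qed
  then obtain z where z: "x \<longlonglongrightarrow> z" by (auto simp: Cauchy_convergent_iff convergent_def)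
  then have "d \<longlonglongrightarrow> infdist z S" unfolding d_def by (rule tendsto_infdist)
  then have "infdist z S = 0" using D \<open>D = 0\<close> LIMSEQ_unique by blast
  then show ?thesis using z in_closed_iff_infdist_zero[OF \<open>closed S\<close> \<open>S \<noteq> {}\<close>] by blast
qed

section \<open>Relaxed compositions of averaged operators\<close>

lemma averaged_nonexpansive: "averaged \<alpha> T \<Longrightarrow> nonexpansive T"
  by (simp add: averaged_def)

lemma nonexpansive_comp: "nonexpansive T \<Longrightarrow> nonexpansive U \<Longrightarrow> nonexpansive (\<lambda>x. T (U x))"
  unfolding nonexpansive_def by (meson order_trans)

lemma closed_Fix_nonexpansive:
  fixes T :: "'a::real_normed_vector \<Rightarrow> 'a"
  assumes "nonexpansive T"
  shows "closed (Fix T)"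
proof -
  have "continuous_on UNIV T"
    using assms unfolding nonexpansive_def continuous_on_iff dist_norm
    by (meson le_less_trans)
  then show ?thesis unfolding Fix_def by (intro closed_Collect_eq continuous_on_id)
qed

lemma averaged_norm_sq_le:
  fixes T :: "'a::real_inner \<Rightarrow> 'a"
  assumes "averaged \<alpha> T"
  shows "(norm (T x - T y))^2 \<le> (norm (x - y))^2 - (1 - \<alpha>) / \<alpha> * (norm ((x - T x) - (y - T y)))^2"
proof -
  from assms obtain R where \<alpha>: "0 < \<alpha>" "\<alpha> < 1" and R: "nonexpansive R"
    and T: "T = (\<lambda>x. (1 - \<alpha>) *\<^sub>R x + \<alpha> *\<^sub>R R x)" by (auto simp: averaged_def)
  define u where "u = x - y"
  define v where "v = R x - R y"
  have "norm v \<le> norm u" using R by (simp add: nonexpansive_def u_def v_def)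
  then have uv: "inner v v \<le> inner u u" by (simp add: power_mono flip: power2_norm_eq_inner)
  have "T x - T y = (1 - \<alpha>) *\<^sub>R u + \<alpha> *\<^sub>R v" "(x - T x) - (y - T y) = \<alpha> *\<^sub>R (u - v)"
    by (simp_all add: T u_def v_def algebra_simps)
  moreover have "(norm ((1 - \<alpha>) *\<^sub>R u + \<alpha> *\<^sub>R v))^2 = (norm u)^2 - (1 - \<alpha>) / \<alpha> * (norm (\<alpha> *\<^sub>R (u - v)))^2
      - \<alpha> * (inner u u - inner v v)"
    using \<alpha>(1) unfolding power2_norm_eq_inner
    by (simp add: inner_add_left inner_add_right inner_diff_left inner_diff_right inner_commute
        power2_eq_square field_simps)
  ultimately show ?thesis using \<alpha>(1) uv by (simp add: u_def)
qed

lemma averaged_comp_norm_sq_le: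
  fixes T1 T2 :: "'a::real_inner \<Rightarrow> 'a"
  assumes "averaged \<alpha>1 T1" "averaged \<alpha>2 T2" "T1 (T2 z) = z"
  shows "(norm (T1 (T2 x) - z))^2 \<le> (norm (x - z))^2
     - (1 - \<alpha>1) / \<alpha>1 * (norm ((T2 x - T1 (T2 x)) - (T2 z - z)))^2
     - (1 - \<alpha>2) / \<alpha>2 * (norm ((x - T2 x) - (z - T2 z)))^2"
  using averaged_norm_sq_le[OF assms(1), of "T2 x" "T2 z"] averaged_norm_sq_le[OF assms(2), of x z] assms(3)
  by simp

lemma relaxed_step_norm_sq:
  fixes x z Tx A B :: "'a::real_inner"
  assumes h: "(norm (Tx - z))^2 \<le> (norm (x - z))^2 - b1 * (norm A)^2 - b2 * (norm B)^2"
    and AB: "A + B = x - Tx" and l: "0 \<le> l"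
  shows "(norm (x + l *\<^sub>R (Tx - x) - z))^2
    \<le> (norm (x - z))^2 - l * (b1 * (norm A)^2 + b2 * (norm B)^2 - (l - 1) * (norm (A + B))^2)"
proof -
  define P where "P = b1 * (norm A)^2 + b2 * (norm B)^2"
  have Tx: "Tx - z = (x - z) - (A + B)" and relaxed: "x + l *\<^sub>R (Tx - x) - z = (x - z) - l *\<^sub>R (A + B)"
    unfolding AB by (simp_all add: algebra_simps)
  have "2 * inner (x - z) (A + B) \<ge> (norm (A + B))^2 + P"
    using h unfolding Tx P_def power2_norm_eq_inner by (simp add: inner_diff_left inner_diff_right inner_commute)
  then have "l * (norm (A + B))^2 + l * P \<le> l * (2 * inner (x - z) (A + B))"
    using l by (simp add: distrib_left[symmetric] mult_left_mono)
  moreover have "(norm (x + l *\<^sub>R (Tx - x) - z))^2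
      = (norm (x - z))^2 - l * (2 * inner (x - z) (A + B)) + l^2 * (norm (A + B))^2"
    unfolding relaxed power2_norm_eq_inner
    by (simp add: inner_diff_left inner_diff_right inner_commute power2_eq_square algebra_simps)
  ultimately show ?thesis unfolding P_def[symmetric] by (simp add: power2_eq_square algebra_simps)
qed

lemma weighted_norm_sq_split:
  fixes A B :: "'a::real_inner"
  assumes "a1 + a2 \<noteq> 0"
  shows "a1 * (norm A)^2 + a2 * (norm B)^2
    = (a1 + a2) * (norm (A - (a2 / (a1 + a2)) *\<^sub>R (A + B)))^2 + a1 * a2 / (a1 + a2) * (norm (A + B))^2"
proof -
  have scalar: "a1 * p + a2 * r = (a1 + a2) * (p - 2 * (a2 / (a1 + a2)) * (p + q) + (a2 / (a1 + a2))^2 * (p + 2 * q + r))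
     + a1 * a2 / (a1 + a2) * (p + 2 * q + r)" for p q r :: real
  proof -
    define k where "k = a1 + a2"
    have a1: "a1 = k - a2" by (simp add: k_def)
    have "k \<noteq> 0" using assms by (simp add: k_def)
    then show ?thesis unfolding a1 by (simp add: field_simps power2_eq_square)
  qed
  have "(norm (A - w *\<^sub>R (A + B)))^2 = inner A A - 2 * w * (inner A A + inner A B) + w^2 * (inner A A + 2 * inner A B + inner B B)" for w
    unfolding power2_norm_eq_inner
    by (simp add: inner_diff_left inner_diff_right inner_add_left inner_add_right inner_commute algebra_simps power2_eq_square)
  moreover have "(norm (A + B))^2 = inner A A + 2 * inner A B + inner B B"
    unfolding power2_norm_eq_inner by (simp add: inner_add_left inner_add_right inner_commute)
  ultimately show ?thesis using scalar by (simp add: power2_norm_eq_inner)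
qed

lemma norm_sq_le_weighted_excess:
  fixes A B :: "'a::real_inner"
  assumes e: "0 < \<epsilon>" "\<epsilon> \<le> 1" and b: "\<epsilon> \<le> b1" "\<epsilon> \<le> b2"
    and \<mu>: "\<mu> \<le> b1 * b2 / (b1 + b2) - \<epsilon>^2"
  shows "\<epsilon>^2 * (norm A)^2 \<le> 2 * (b1 * (norm A)^2 + b2 * (norm B)^2 - \<mu> * (norm (A + B))^2)"
proof -
  define w where "w = b2 / (b1 + b2)"
  define X where "X = (norm (A - w *\<^sub>R (A + B)))^2"
  define D where "D = (norm (A + B))^2"
  have k: "b1 + b2 > 0" using e b by linarith
  have "0 \<le> w" "w \<le> 1" using e b k by (auto simp: w_def field_simps)
  then have "norm (w *\<^sub>R (A + B)) \<le> norm (A + B)" by (simp add: mult_left_le_one_le)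
  then have "norm A \<le> norm (A - w *\<^sub>R (A + B)) + norm (A + B)"
    using norm_triangle_ineq[of "A - w *\<^sub>R (A + B)" "w *\<^sub>R (A + B)"] by simp
  then have "(norm A)^2 \<le> (norm (A - w *\<^sub>R (A + B)) + norm (A + B))^2" by (simp add: power_mono)
  also have "\<dots> \<le> 2 * X + 2 * D" unfolding X_def D_def by (rule add_power2_le)
  finally have "\<epsilon>^2 * (norm A)^2 \<le> \<epsilon>^2 * (2 * X) + \<epsilon>^2 * (2 * D)"
    using mult_left_mono[of "(norm A)^2" "2 * X + 2 * D" "\<epsilon>^2"] by (simp add: distrib_left)
  moreover have "\<epsilon> * \<epsilon> \<le> \<epsilon> * 1" using e by (intro mult_left_mono) auto
  then have "\<epsilon>^2 \<le> b1 + b2" using b e unfolding power2_eq_square by linarith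
  then have "\<epsilon>^2 * (2 * X) \<le> (b1 + b2) * (2 * X)" by (intro mult_right_mono) (auto simp: X_def)
  moreover have "\<epsilon>^2 * (2 * D) \<le> (b1 * b2 / (b1 + b2) - \<mu>) * (2 * D)"
    using \<mu> by (intro mult_right_mono) (auto simp: D_def)
  moreover have "b1 * (norm A)^2 + b2 * (norm B)^2 = (b1 + b2) * X + b1 * b2 / (b1 + b2) * D"
    unfolding X_def D_def w_def using k by (intro weighted_norm_sq_split) simp
  then have "2 * (b1 * (norm A)^2 + b2 * (norm B)^2 - \<mu> * D)
      = (b1 + b2) * (2 * X) + (b1 * b2 / (b1 + b2) - \<mu>) * (2 * D)"
    by (simp add: algebra_simps)
  ultimately show ?thesis unfolding D_def by linarith
qed

lemma relaxation_le_harmonic_mean: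
  fixes \<epsilon> \<alpha>1 \<alpha>2 l \<phi> :: real
  assumes e: "0 < \<epsilon>" "\<epsilon> \<le> 1"
    and \<alpha>: "0 < \<alpha>1" "\<alpha>1 \<le> 1 / (1 + \<epsilon>)" "0 < \<alpha>2" "\<alpha>2 \<le> 1 / (1 + \<epsilon>)"
    and l: "l \<le> (1 - \<epsilon>) * (1 + \<epsilon> * \<phi>) / \<phi>"
    and \<phi>: "\<phi> = (\<alpha>1 + \<alpha>2 - 2 * \<alpha>1 * \<alpha>2) / (1 - \<alpha>1 * \<alpha>2)"
  defines "b1 \<equiv> (1 - \<alpha>1) / \<alpha>1" and "b2 \<equiv> (1 - \<alpha>2) / \<alpha>2"
  shows "l - 1 \<le> b1 * b2 / (b1 + b2) - \<epsilon>^2"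
proof -
  have b: "\<epsilon> \<le> b1" "\<epsilon> \<le> b2" unfolding b1_def b2_def using e(1) \<alpha> by (simp_all add: field_simps)
  have "\<alpha>1 + \<alpha>1 * \<epsilon> \<le> 1" "\<alpha>2 + \<alpha>2 * \<epsilon> \<le> 1" using \<alpha> e(1) by (simp_all add: field_simps)
  moreover have "0 < \<alpha>1 * \<epsilon>" "0 < \<alpha>2 * \<epsilon>" using \<alpha> e(1) by simp_all
  ultimately have "\<alpha>1 < 1" "\<alpha>2 < 1" by linarith+
  define s where "s = b1 * b2 / (b1 + b2)"
  have "0 \<le> s" using b e by (simp add: s_def)
  have den: "0 < 1 - \<alpha>1 * \<alpha>2" using mult_strict_right_mono[OF \<open>\<alpha>1 < 1\<close> \<alpha>(3)] \<open>\<alpha>2 < 1\<close> by linarith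
  have "0 < \<alpha>1 * (1 - \<alpha>2) + \<alpha>2 * (1 - \<alpha>1)" using \<alpha> \<open>\<alpha>1 < 1\<close> \<open>\<alpha>2 < 1\<close> by (simp add: add_pos_pos)
  then have num: "0 < \<alpha>1 + \<alpha>2 - 2 * \<alpha>1 * \<alpha>2" by (simp add: algebra_simps)
  have "1 / \<phi> = s + 1"
  proof -
    have "b1 + b2 = (\<alpha>1 + \<alpha>2 - 2 * \<alpha>1 * \<alpha>2) / (\<alpha>1 * \<alpha>2)"
      "b1 * b2 + b1 + b2 = (1 - \<alpha>1 * \<alpha>2) / (\<alpha>1 * \<alpha>2)"
      using \<alpha> by (simp_all add: b1_def b2_def field_simps)
    moreover have "s + 1 = (b1 * b2 + b1 + b2) / (b1 + b2)" using b e by (simp add: s_def field_simps)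
    ultimately show ?thesis using \<phi> num den \<alpha> by simp
  qed
  moreover have "\<phi> > 0" using \<phi> num den by simp
  then have "(1 - \<epsilon>) * (1 + \<epsilon> * \<phi>) / \<phi> = (1 - \<epsilon>) * (1 / \<phi>) + \<epsilon> * (1 - \<epsilon>)"
    by (simp add: field_simps)
  ultimately have "l - 1 \<le> (1 - \<epsilon>) * s - \<epsilon>^2" using l by (simp add: algebra_simps power2_eq_square)
  moreover have "(1 - \<epsilon>) * s \<le> s" using \<open>0 \<le> s\<close> e by (simp add: algebra_simps)
  ultimately show ?thesis unfolding s_def by linarith
qed

lemma power3_div2_le_if_power2_le:
  fixes \<epsilon> l Q N :: real
  assumes "0 < \<epsilon>" "\<epsilon> \<le> l" "\<epsilon>^2 * N \<le> 2 * Q" "0 \<le> N"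
  shows "\<epsilon>^3 / 2 * N \<le> l * Q"
proof -
  have "0 \<le> \<epsilon>^2 * N" using assms(4) by simp
  then have "0 \<le> Q" using assms(3) by linarith
  have "\<epsilon> * (\<epsilon>^2 * N) \<le> \<epsilon> * (2 * Q)" using assms(1,3) by (simp add: mult_left_mono)
  also have "\<dots> \<le> l * (2 * Q)" using assms(2) \<open>0 \<le> Q\<close> by (intro mult_right_mono) auto
  finally have "\<epsilon> * (\<epsilon>^2 * N) \<le> l * (2 * Q)" .
  moreover have "\<epsilon>^3 / 2 * N = \<epsilon> * (\<epsilon>^2 * N) / 2" by (simp add: power3_eq_cube power2_eq_square)
  ultimately show ?thesis by linarith
qed

lemma relaxed_composition_step:
  fixes T1 T2 :: "'a::real_inner \<Rightarrow> 'a"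
  assumes e: "0 < \<epsilon>" "\<epsilon> \<le> 1"
    and \<alpha>: "0 < \<alpha>1" "\<alpha>1 \<le> 1 / (1 + \<epsilon>)" "0 < \<alpha>2" "\<alpha>2 \<le> 1 / (1 + \<epsilon>)"
    and avg: "averaged \<alpha>1 T1" "averaged \<alpha>2 T2"
    and l: "\<epsilon> \<le> l" "l \<le> (1 - \<epsilon>) * (1 + \<epsilon> * \<phi>) / \<phi>"
    and \<phi>: "\<phi> = (\<alpha>1 + \<alpha>2 - 2 * \<alpha>1 * \<alpha>2) / (1 - \<alpha>1 * \<alpha>2)"
    and fixed: "T1 (T2 z) = z"
  shows "(norm (x + l *\<^sub>R (T1 (T2 x) - x) - z))^2 + \<epsilon>^3 / 2 * (norm (T1 (T2 x) - T2 x + T2 z - z))^2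
      \<le> (norm (x - z))^2"
    and "(norm (x + l *\<^sub>R (T1 (T2 x) - x) - z))^2 + \<epsilon>^3 / 2 * (norm (T2 x - x - T2 z + z))^2
      \<le> (norm (x - z))^2"
proof -
  define b1 where "b1 = (1 - \<alpha>1) / \<alpha>1"
  define b2 where "b2 = (1 - \<alpha>2) / \<alpha>2"
  have b: "\<epsilon> \<le> b1" "\<epsilon> \<le> b2" unfolding b1_def b2_def using e(1) \<alpha> by (simp_all add: field_simps)
  have \<mu>: "l - 1 \<le> b1 * b2 / (b1 + b2) - \<epsilon>^2"
    unfolding b1_def b2_def by (rule relaxation_le_harmonic_mean[OF e \<alpha> l(2) \<phi>])
  moreover have "b2 * b1 / (b2 + b1) = b1 * b2 / (b1 + b2)" by (simp add: ac_simps)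
  ultimately have \<mu>': "l - 1 \<le> b2 * b1 / (b2 + b1) - \<epsilon>^2" by simp
  define A where "A = (T2 x - T1 (T2 x)) - (T2 z - z)"
  define B where "B = (x - T2 x) - (z - T2 z)"
  define Q where "Q = b1 * (norm A)^2 + b2 * (norm B)^2 - (l - 1) * (norm (A + B))^2"
  have "(norm (T1 (T2 x) - z))^2 \<le> (norm (x - z))^2 - b1 * (norm A)^2 - b2 * (norm B)^2"
    using averaged_comp_norm_sq_le[OF avg fixed, of x] by (simp add: A_def B_def b1_def b2_def)
  moreover have "A + B = x - T1 (T2 x)" using fixed by (simp add: A_def B_def algebra_simps)
  ultimately have decrease: "(norm (x + l *\<^sub>R (T1 (T2 x) - x) - z))^2 \<le> (norm (x - z))^2 - l * Q"
    unfolding Q_def using e l(1) by (intro relaxed_step_norm_sq) auto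
  have "\<epsilon>^2 * (norm A)^2 \<le> 2 * Q"
    unfolding Q_def by (rule norm_sq_le_weighted_excess[OF e b \<mu>])
  moreover have "\<epsilon>^2 * (norm B)^2 \<le> 2 * Q"
    using norm_sq_le_weighted_excess[OF e b(2,1) \<mu>', of B A] unfolding Q_def by (simp add: add.commute)
  moreover have "T1 (T2 x) - T2 x + T2 z - z = - A" "T2 x - x - T2 z + z = - B"
    by (simp_all add: A_def B_def algebra_simps)
  ultimately show "(norm (x + l *\<^sub>R (T1 (T2 x) - x) - z))^2 + \<epsilon>^3 / 2 * (norm (T1 (T2 x) - T2 x + T2 z - z))^2
      \<le> (norm (x - z))^2"
    and "(norm (x + l *\<^sub>R (T1 (T2 x) - x) - z))^2 + \<epsilon>^3 / 2 * (norm (T2 x - x - T2 z + z))^2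
      \<le> (norm (x - z))^2"
    using decrease power3_div2_le_if_power2_le[OF e(1) l(1)] by fastforce+
qed

lemma relaxed_step_perturbation:
  assumes "nonexpansive T" "0 \<le> l"
  shows "norm ((x + l *\<^sub>R (T (y + e2) + e1 - x)) - (x + l *\<^sub>R (T y - x))) \<le> l * norm e1 + l * norm e2"
proof -
  have "(x + l *\<^sub>R (T (y + e2) + e1 - x)) - (x + l *\<^sub>R (T y - x)) = l *\<^sub>R ((T (y + e2) - T y) + e1)"
    by (simp add: algebra_simps)
  then have "norm ((x + l *\<^sub>R (T (y + e2) + e1 - x)) - (x + l *\<^sub>R (T y - x))) = l * norm ((T (y + e2) - T y) + e1)"
    using assms(2) by simp
  also have "\<dots> \<le> l * (norm e2 + norm e1)"
  proof (rule mult_left_mono[OF _ assms(2)])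
    have "norm (T (y + e2) - T y) \<le> norm e2"
      using assms(1) unfolding nonexpansive_def by (metis add_diff_cancel_left')
    then show "norm ((T (y + e2) - T y) + e1) \<le> norm e2 + norm e1"
      using norm_triangle_ineq[of "T (y + e2) - T y" e1] by linarith
  qed
  finally show ?thesis by (simp add: algebra_simps)
qed

lemma perturbed_decrease_step:
  fixes x' y z :: "'a::real_normed_vector"
  assumes "norm (x' - y) \<le> \<delta>" "(norm (y - z))^2 + c \<le> (norm (x - z))^2" "0 \<le> c"
  shows "norm (y - z) \<le> norm (x - z)" "norm (x' - z) \<le> norm (x - z) + \<delta>"
proof -
  have "(norm (y - z))^2 \<le> (norm (x - z))^2" using assms(2,3) by linarith
  then show "norm (y - z) \<le> norm (x - z)" by (rule power2_le_imp_le) simp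
  moreover have "norm (x' - z) \<le> norm (x' - y) + norm (y - z)"
    using norm_triangle_ineq[of "x' - y" "y - z"] by simp
  ultimately show "norm (x' - z) \<le> norm (x - z) + \<delta>" using assms(1) by linarith
qed

lemma quasi_fejer_if_perturbed_decrease:
  fixes x y :: "nat \<Rightarrow> 'a::real_normed_vector"
  assumes err: "\<And>n. norm (x (Suc n) - y n) \<le> \<delta> n" and "\<And>n. 0 \<le> \<delta> n" "summable \<delta>"
    and dec: "\<And>z n. z \<in> S \<Longrightarrow> (norm (y n - z))^2 + c z n \<le> (norm (x n - z))^2"
    and c: "\<And>z n. z \<in> S \<Longrightarrow> 0 \<le> c z n"
  shows "quasi_fejer S \<delta> x"
proof -
  have "norm (x (Suc n) - z) \<le> norm (x n - z) + \<delta> n" if "z \<in> S" for z n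
    by (rule perturbed_decrease_step(2)[OF err dec[OF that] c[OF that]])
  then show ?thesis unfolding quasi_fejer_def using assms(2,3) by blast
qed

lemma summable_if_perturbed_decrease:
  fixes x y :: "nat \<Rightarrow> 'a::real_normed_vector"
  assumes err: "\<And>n. norm (x (Suc n) - y n) \<le> \<delta> n" and \<delta>: "\<And>n. 0 \<le> \<delta> n" "summable \<delta>"
    and dec: "\<And>n. (norm (y n - z))^2 + c n \<le> (norm (x n - z))^2" and c: "\<And>n. 0 \<le> c n"
  shows "summable c"
proof -
  note step = perturbed_decrease_step[OF err dec c]
  have "convergent (\<lambda>n. norm (x n - z))"
    using step(2) norm_ge_zero \<delta> by (rule quasi_decreasing_convergent)
  then obtain A where "\<And>n. norm (norm (x n - z)) \<le> A" using convergent_imp_Bseq by (force simp: Bseq_def)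
  then have A: "norm (y n - z) \<le> A" for n using step(1)[of n] by (simp add: order_trans)
  define K where "K = 2 * A + suminf \<delta>"
  have bound: "norm (c n) \<le> (norm (x n - z))^2 - (norm (x (Suc n) - z))^2 + \<delta> n * K" for n
  proof -
    have "norm (x (Suc n) - z) \<le> norm (y n - z) + \<delta> n"
      using err[of n] norm_triangle_ineq[of "x (Suc n) - y n" "y n - z"] by simp
    then have "(norm (x (Suc n) - z))^2 \<le> (norm (y n - z))^2 + \<delta> n * (2 * norm (y n - z) + \<delta> n)"
      by (rule power2_le_add_if_le[OF norm_ge_zero])
    moreover have "\<delta> n * (2 * norm (y n - z) + \<delta> n) \<le> \<delta> n * K"
      using A[of n] sum_le_suminf[of \<delta> "{n}"] \<delta> by (intro mult_left_mono) (auto simp: K_def)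
    ultimately show ?thesis using dec[of n] c[of n] by simp
  qed
  have "summable (\<lambda>n. (norm (x n - z))^2 - (norm (x (Suc n) - z))^2 + \<delta> n * K)"
    using \<open>convergent (\<lambda>n. norm (x n - z))\<close> \<delta>(2) by (rule summable_telescope_power2)
  then show ?thesis by (rule summable_comparison_test') (rule bound)
qed

lemma summable_norm_sq_add:
  fixes u v :: "nat \<Rightarrow> 'a::real_normed_vector"
  assumes "summable (\<lambda>n. (norm (u n))^2)" "summable (\<lambda>n. (norm (v n))^2)"
  shows "summable (\<lambda>n. (norm (u n + v n))^2)"
proof (rule summable_comparison_test')
  show "summable (\<lambda>n. 2 * (norm (u n))^2 + 2 * (norm (v n))^2)"
    using assms by (intro summable_add summable_mult)
  fix n
  have "(norm (u n + v n))^2 \<le> (norm (u n) + norm (v n))^2"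
    by (intro power_mono norm_triangle_ineq) simp
  moreover have "norm ((norm (u n + v n))^2) = (norm (u n + v n))^2" by simp
  ultimately show "norm ((norm (u n + v n))^2) \<le> 2 * (norm (u n))^2 + 2 * (norm (v n))^2"
    using add_power2_le[of "norm (u n)" "norm (v n)"] by linarith
qed

lemma relaxed_composition_iteration:
  fixes x e1 e2 :: "nat \<Rightarrow> 'a::real_inner" and T1 T2 :: "nat \<Rightarrow> 'a \<Rightarrow> 'a"
  assumes \<epsilon>: "0 < \<epsilon>" "\<epsilon> \<le> 1"
    and \<alpha>: "\<And>n. 0 < \<alpha>1 n" "\<And>n. \<alpha>1 n \<le> 1 / (1 + \<epsilon>)" "\<And>n. 0 < \<alpha>2 n" "\<And>n. \<alpha>2 n \<le> 1 / (1 + \<epsilon>)"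
    and avg1: "\<And>n. averaged (\<alpha>1 n) (T1 n)" and avg2: "\<And>n. averaged (\<alpha>2 n) (T2 n)"
    and l: "\<And>n. \<epsilon> \<le> lam n" "\<And>n. lam n \<le> (1 - \<epsilon>) * (1 + \<epsilon> * \<phi> n) / \<phi> n"
    and \<phi>: "\<And>n. \<phi> n = (\<alpha>1 n + \<alpha>2 n - 2 * \<alpha>1 n * \<alpha>2 n) / (1 - \<alpha>1 n * \<alpha>2 n)"
    and x_Suc: "\<And>n. x (Suc n) = x n + lam n *\<^sub>R (T1 n (T2 n (x n) + e2 n) + e1 n - x n)"
    and S: "S \<subseteq> (\<Inter>n. Fix (\<lambda>y. T1 n (T2 n y)))"
    and e: "summable (\<lambda>n. lam n * norm (e1 n))" "summable (\<lambda>n. lam n * norm (e2 n))"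
  shows "quasi_fejer S (\<lambda>n. lam n * norm (e1 n) + lam n * norm (e2 n)) x"
    and "z \<in> S \<Longrightarrow> summable (\<lambda>n. (norm (T1 n (T2 n (x n)) - T2 n (x n) + T2 n z - z))^2)"
    and "z \<in> S \<Longrightarrow> summable (\<lambda>n. (norm (T2 n (x n) - x n - T2 n z + z))^2)"
proof -
  define y where "y n = x n + lam n *\<^sub>R (T1 n (T2 n (x n)) - x n)" for n
  define \<delta> where "\<delta> n = lam n * norm (e1 n) + lam n * norm (e2 n)" for n
  have fixed: "T1 n (T2 n z) = z" if "z \<in> S" for z n using S that by (auto simp: Fix_def)
  have dec: "(norm (y n - z))^2 + \<epsilon>^3 / 2 * (norm (T1 n (T2 n (x n)) - T2 n (x n) + T2 n z - z))^2
      \<le> (norm (x n - z))^2"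
    "(norm (y n - z))^2 + \<epsilon>^3 / 2 * (norm (T2 n (x n) - x n - T2 n z + z))^2 \<le> (norm (x n - z))^2"
    if "z \<in> S" for z n
    unfolding y_def by (rule relaxed_composition_step[OF \<epsilon> \<alpha> avg1 avg2 l \<phi> fixed[OF that]])+
  have err: "norm (x (Suc n) - y n) \<le> \<delta> n" for n
    unfolding x_Suc y_def \<delta>_def
    by (rule relaxed_step_perturbation[OF averaged_nonexpansive[OF avg1]]) (use l(1)[of n] \<epsilon>(1) in linarith)
  have \<delta>: "0 \<le> \<delta> n" "summable \<delta>" for n
    using l(1)[of n] \<epsilon>(1) summable_add[OF e] unfolding \<delta>_def[abs_def] by simp_all
  show "quasi_fejer S (\<lambda>n. lam n * norm (e1 n) + lam n * norm (e2 n)) x"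
    using quasi_fejer_if_perturbed_decrease[OF err \<delta> dec(1)] \<epsilon>(1) unfolding \<delta>_def[abs_def] by auto
  show "summable (\<lambda>n. (norm (T1 n (T2 n (x n)) - T2 n (x n) + T2 n z - z))^2)"
    and "summable (\<lambda>n. (norm (T2 n (x n) - x n - T2 n z + z))^2)" if "z \<in> S"
    using summable_if_perturbed_decrease[OF err \<delta> dec(1)[OF that]]
      summable_if_perturbed_decrease[OF err \<delta> dec(2)[OF that]] \<epsilon>(1)
    by (simp_all add: summable_cmult_iff)
qed

theorem corollary4p1:
  fixes \<epsilon> :: real
    and x0 :: "'a::{real_inner, complete_space}"
    and \<alpha>1 \<alpha>2 lam :: "nat \<Rightarrow> real"
    and T1 T2 :: "nat \<Rightarrow> 'a \<Rightarrow> 'a"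
    and e1 e2 x :: "nat \<Rightarrow> 'a"
    and S :: "'a set"
  assumes eps: "0 < \<epsilon>" "\<epsilon> < 1/2"
    and alpha1: "\<And>n. 0 < \<alpha>1 n \<and> \<alpha>1 n \<le> 1 / (1 + \<epsilon>)"
    and alpha2: "\<And>n. 0 < \<alpha>2 n \<and> \<alpha>2 n \<le> 1 / (1 + \<epsilon>)"
    and avg1: "\<And>n. averaged (\<alpha>1 n) (T1 n)"
    and avg2: "\<And>n. averaged (\<alpha>2 n) (T2 n)"
    and lam: "\<And>n. let \<phi> = (\<alpha>1 n + \<alpha>2 n - 2 * \<alpha>1 n * \<alpha>2 n) / (1 - \<alpha>1 n * \<alpha>2 n)
                in \<epsilon> \<le> lam n \<and> lam n \<le> (1 - \<epsilon>) * (1 + \<epsilon> * \<phi>) / \<phi>"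
    and x_0: "x 0 = x0"
    and x_Suc: "\<And>n. x (Suc n) = x n + lam n *\<^sub>R (T1 n (T2 n (x n) + e2 n) + e1 n - x n)"
    and S_def: "S = (\<Inter>n. Fix (\<lambda>y. T1 n (T2 n y)))"
    and S_ne: "S \<noteq> {}"
    and sum_e1: "summable (\<lambda>n. lam n * norm (e1 n))"
    and sum_e2: "summable (\<lambda>n. lam n * norm (e2 n))"
  shows "(\<forall>z\<in>S. summable (\<lambda>n. (norm (T1 n (T2 n (x n)) - T2 n (x n) + T2 n z - z))\<^sup>2))
    \<and> (\<forall>z\<in>S. summable (\<lambda>n. (norm (T2 n (x n) - x n - T2 n z + z))\<^sup>2))
    \<and> summable (\<lambda>n. (norm (T1 n (T2 n (x n)) - x n))\<^sup>2)
    \<and> ((\<forall>z. weak_seq_cluster_point x z \<longrightarrow> z \<in> S) \<longrightarrow>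
           (\<exists>z\<in>S. weakly_converges x z \<and> (interior S \<noteq> {} \<longrightarrow> x \<longlonglongrightarrow> z)))
    \<and> (Liminf sequentially (\<lambda>n. ereal (infdist (x n) S)) = 0 \<longrightarrow> (\<exists>z\<in>S. x \<longlonglongrightarrow> z))"
proof -
  define \<phi> where "\<phi> n = (\<alpha>1 n + \<alpha>2 n - 2 * \<alpha>1 n * \<alpha>2 n) / (1 - \<alpha>1 n * \<alpha>2 n)" for n
  have \<epsilon>: "0 < \<epsilon>" "\<epsilon> \<le> 1" using eps by simp_all
  have \<alpha>: "0 < \<alpha>1 n" "\<alpha>1 n \<le> 1 / (1 + \<epsilon>)" "0 < \<alpha>2 n" "\<alpha>2 n \<le> 1 / (1 + \<epsilon>)" for n
    using alpha1 alpha2 by auto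
  have l: "\<epsilon> \<le> lam n" "lam n \<le> (1 - \<epsilon>) * (1 + \<epsilon> * \<phi> n) / \<phi> n" for n
    using lam[of n] by (simp_all add: Let_def \<phi>_def)
  have "S \<subseteq> (\<Inter>n. Fix (\<lambda>y. T1 n (T2 n y)))" by (simp add: S_def)
  note iteration = relaxed_composition_iteration[OF \<epsilon> \<alpha> avg1 avg2 l \<phi>_def x_Suc this sum_e1 sum_e2]
  note qf = iteration(1) and i = iteration(2) and ii = iteration(3)
  obtain z0 where "z0 \<in> S" using S_ne by blast
  have iii: "summable (\<lambda>n. (norm (T1 n (T2 n (x n)) - x n))\<^sup>2)"
    using summable_norm_sq_add[OF i[OF \<open>z0 \<in> S\<close>] ii[OF \<open>z0 \<in> S\<close>]] by simp
  have iv: "\<exists>z\<in>S. weakly_converges x z \<and> (interior S \<noteq> {} \<longrightarrow> x \<longlonglongrightarrow> z)"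
    if clus: "\<forall>z. weak_seq_cluster_point x z \<longrightarrow> z \<in> S"
  proof -
    obtain z where "z \<in> S" "weakly_converges x z"
      using quasi_fejer_weakly_converges[OF qf S_ne] clus by blast
    then show ?thesis using quasi_fejer_tendsto_if_interior[OF qf] by blast
  qed
  have "closed (Fix (\<lambda>y. T1 n (T2 n y)))" for n
    using nonexpansive_comp[OF averaged_nonexpansive[OF avg1] averaged_nonexpansive[OF avg2]]
    by (rule closed_Fix_nonexpansive)
  then have "closed S" unfolding S_def by blast
  then show ?thesis
    using i ii iii iv quasi_fejer_tendsto_if_liminf_infdist[OF qf _ S_ne] by simp
qed

end
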